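(* Let $n\ge1$, $\lambda_s>0$, $\lambda>0$ and $n_0\ge 3$. Then for every node $i\in\{1,\dots,n_0\}$, $$\Delta^{r(n_0)}_1\le \Delta^{\ell(n_0)}_i\le 2\,\Delta^{r(n_0)}_1 .$$
   Context: Version-age model. A gossip network on a finite node set $\mathcal N$ is specified by source rates $\lambda_{0j}>0$ ($j\in\mathcal N$) and gossip rates $\lambda_{ij}\ge 0$ for ordered pairs $i\neq j$ in $\mathcal N$ ($\lambda_{ij}$ is the rate at which node $i$ sends updates to node $j$); $\lambda_s>0$ is the source's own update rate. For nonempty $S\subseteq\mathcal N$ let $N(S)=\{i\in\mathcal N\setminus S:\ \sum_{j\in S}\lambda_{ij}>0\}$. The version ages $\Delta_S$ ($\emptyset\neq S\subseteq\mathcal N$) are the numbers defined by $$\Delta_S=\frac{\lambda_s+\sum_{i\in N(S)}\big(\sum_{j\in S}\lambda_{ij}\big)\Delta_{S\cup\{i\}}}{\sum_{j\in S}\lambda_{0j}+\sum_{i\in N(S)}\sum_{j\in S}\lambda_{ij}},$$ which is well defined by downward induction on $|S|$. Write $\Delta_i=\Delta_{\{i\}}$. Line network $L(n_0)$ with parameter $n$: node set $\{1,\dots,n_0\}$, $\lambda_{0j}=\lambda/n$ for all $j$, $\lambda_{i,i+1}=\lambda_{i+1,i}=\lambda/2$ for $1\le i\le n_0-1$, all other $\lambda_{ij}=0$; $\Delta^{\ell(n_0)}_i$ denotes $\Delta_i$ in it. Ring network $R(n_0)$ ($n_0\ge3$) with parameter $n$: the same as $L(n_0)$ plus $\lambda_{n_0,1}=\lambda_{1,n_0}=\lambda/2$;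 $\Delta^{r(n_0)}_i$ denotes $\Delta_i$ in it. *)

theory Defs
  imports Main "HOL.Real"
begin

text \<open>A gossip network: node set N, source rates l0, gossip rates l (l i j = rate
from i to j), source update rate ls.  N(S) = nodes outside S gossiping into S.\<close>

definition nbr :: "'a set \<Rightarrow> ('a \<Rightarrow> 'a \<Rightarrow> real) \<Rightarrow> 'a set \<Rightarrow> 'a set" where
  "nbr N l S = {i \<in> N - S. (\<Sum>j\<in>S. l i j) > 0}"

function vage :: "'a set \<Rightarrow> ('a \<Rightarrow> real) \<Rightarrow> ('a \<Rightarrow> 'a \<Rightarrow> real) \<Rightarrow> real \<Rightarrow> 'a set \<Rightarrow> real" where
  "vage N l0 l ls S =
     (if finite N \<and> S \<subseteq> N \<and> S \<noteq> {} then
        (ls + (\<Sum>i\<in>nbr N l S. (\<Sum>j\<in>S. l i j) * vage N l0 l ls (insert i S)))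
        / ((\<Sum>j\<in>S. l0 j) + (\<Sum>i\<in>nbr N l S. \<Sum>j\<in>S. l i j))
      else 0)"
  by pat_completeness auto
termination
proof (relation "measure (\<lambda>(N, l0, l, ls, S). card (N - S))")
  show "wf (measure (\<lambda>(N, l0, l, ls, S). card (N - S)))" by simp
next
  fix N :: "'a set" and l0 l ls S i
  assume h: "finite N \<and> S \<subseteq> N \<and> S \<noteq> {}" and i: "i \<in> nbr N l S"
  then have "i \<in> N - S" by (simp add: nbr_def)
  then have "card (N - insert i S) < card (N - S)"
    using h by (metis Diff_insert card_Diff1_less finite_Diff)
  then show "((N, l0, l, ls, insert i S), N, l0, l, ls, S)
      \<in> measure (\<lambda>(N, l0, l, ls, S). card (N - S))" by simp
qed

declare vage.simps [simp del]

definition line_rates :: "real \<Rightarrow> nat \<Rightarrow> nat \<Rightarrow> real" where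
  "line_rates lam i j = (if j = i + 1 \<or> i = j + 1 then lam / 2 else 0)"

definition ring_rates :: "nat \<Rightarrow> real \<Rightarrow> nat \<Rightarrow> nat \<Rightarrow> real" where
  "ring_rates n0 lam i j =
     (if j = i + 1 \<or> i = j + 1 \<or> (i = n0 \<and> j = 1) \<or> (i = 1 \<and> j = n0) then lam / 2 else 0)"

definition line_age :: "nat \<Rightarrow> nat \<Rightarrow> real \<Rightarrow> real \<Rightarrow> nat \<Rightarrow> real" where
  "line_age n0 n lam ls i = vage {1..n0} (\<lambda>_. lam / real n) (line_rates lam) ls {i}"

definition ring_age :: "nat \<Rightarrow> nat \<Rightarrow> real \<Rightarrow> real \<Rightarrow> nat \<Rightarrow> real" where
  "ring_age n0 n lam ls i = vage {1..n0} (\<lambda>_. lam / real n) (ring_rates n0 lam) ls {i}"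

end

theory Submission
  imports Defs
begin

text \<open>Starting from a single node, the recursion for \<open>vage\<close> only visits sets obtained by
  repeatedly adding a neighbour: intervals in the line, and arcs through node 1 in the ring.
  With uniform source rate \<open>a\<close>, the age of such a set depends only on its size \<open>k\<close> and its
  gossip inflow, which is \<open>\<lambda>\<close> for every proper arc of the ring and \<open>\<lambda>/2\<close> or \<open>\<lambda>\<close> for every
  proper interval of the line. Hence the ring ages are exactly the solution \<open>R k\<close> of a
  one-dimensional recursion, and a comparison principle bounds the line ages between \<open>R k\<close>,
  a subsolution for every inflow \<open>\<le> \<lambda>\<close>, and \<open>2 R k\<close>, a supersolution for every inflow
  in \<open>[\<lambda>/2, \<lambda>]\<close>.\<close>

definition inflow :: "'a set \<Rightarrow> ('a \<Rightarrow> 'a \<Rightarrow> real) \<Rightarrow> 'a set \<Rightarrow> real" where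
  "inflow N l S = (\<Sum>i\<in>nbr N l S. \<Sum>j\<in>S. l i j)"

lemma vage_eq:
  assumes "finite N" "S \<subseteq> N" "S \<noteq> {}"
  shows "vage N l0 l ls S =
    (ls + (\<Sum>i\<in>nbr N l S. (\<Sum>j\<in>S. l i j) * vage N l0 l ls (insert i S)))
      / ((\<Sum>j\<in>S. l0 j) + inflow N l S)"
  using assms by (subst vage.simps) (simp add: inflow_def)

lemma vage_comparison:
  assumes fin: "finite N" and a: "a > 0"
    and closed: "\<And>S i. P S \<Longrightarrow> S \<subseteq> N \<Longrightarrow> S \<noteq> {} \<Longrightarrow> i \<in> nbr N l S \<Longrightarrow> P (insert i S)"
    and sub: "\<And>S. P S \<Longrightarrow> S \<subseteq> N \<Longrightarrow> S \<noteq> {} \<Longrightarrow>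
      Y (card S) * (real (card S) * a + inflow N l S) \<le> ls + inflow N l S * Y (Suc (card S))"
    and super: "\<And>S. P S \<Longrightarrow> S \<subseteq> N \<Longrightarrow> S \<noteq> {} \<Longrightarrow>
      ls + inflow N l S * Z (Suc (card S)) \<le> Z (card S) * (real (card S) * a + inflow N l S)"
    and S: "P S" "S \<subseteq> N" "S \<noteq> {}"
  shows "Y (card S) \<le> vage N (\<lambda>_. a) l ls S \<and> vage N (\<lambda>_. a) l ls S \<le> Z (card S)"
  using S
proof (induction "card N - card S" arbitrary: S rule: less_induct)
  case less
  define w where "w i = (\<Sum>j\<in>S. l i j)" for i
  define V where "V i = vage N (\<lambda>_. a) l ls (insert i S)" for i
  let ?r = "inflow N l S"
  have finS: "finite S" using less.prems fin finite_subset by blast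
  have w_pos: "w i > 0" if "i \<in> nbr N l S" for i using that by (simp add: nbr_def w_def)
  have V_bounds: "Y (Suc (card S)) \<le> V i \<and> V i \<le> Z (Suc (card S))" if i: "i \<in> nbr N l S" for i
  proof -
    have "i \<in> N" "i \<notin> S" using i by (auto simp: nbr_def)
    then have card_ins: "card (insert i S) = Suc (card S)"
      and "card (insert i S) \<le> card N"
      using finS fin less.prems by (simp, intro card_mono) auto
    then have "card N - card (insert i S) < card N - card S" by simp
    from less.hyps[OF this closed[OF less.prems i]] show ?thesis
      using \<open>i \<in> N\<close> less.prems card_ins by (simp add: V_def)
  qed
  have "?r \<ge> 0"
    unfolding inflow_def by (rule sum_nonneg) (simp add: nbr_def less_imp_le)
  moreover have "card S > 0" using finS less.prems by auto
  ultimately have den_pos: "real (card S) * a + ?r > 0" using a by (simp add: add_pos_nonneg)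
  have vage_S: "vage N (\<lambda>_. a) l ls S = (ls + (\<Sum>i\<in>nbr N l S. w i * V i)) / (real (card S) * a + ?r)"
    using vage_eq[OF fin less.prems(2,3)] by (simp add: w_def V_def)
  have r_eq: "?r = (\<Sum>i\<in>nbr N l S. w i)" by (simp add: inflow_def w_def)
  have "?r * Y (Suc (card S)) \<le> (\<Sum>i\<in>nbr N l S. w i * V i)"
    and "(\<Sum>i\<in>nbr N l S. w i * V i) \<le> ?r * Z (Suc (card S))"
    unfolding r_eq sum_distrib_right
    by (intro sum_mono mult_left_mono; use V_bounds w_pos in \<open>auto intro: less_imp_le\<close>)+
  then show ?case
    unfolding vage_S using sub[OF less.prems] super[OF less.prems] den_pos
    by (simp add: pos_le_divide_eq pos_divide_le_eq)
qed

text \<open>The age of an arc of \<open>k\<close> nodes in a ring of \<open>m\<close> nodes: each proper arc receives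
  gossip at total rate \<open>g\<close> from its two outside neighbours.\<close>
function arc_age :: "real \<Rightarrow> real \<Rightarrow> real \<Rightarrow> nat \<Rightarrow> nat \<Rightarrow> real" where
  "arc_age ls a g m k =
     (if m \<le> k then ls / (real m * a) else (ls + g * arc_age ls a g m (Suc k)) / (real k * a + g))"
  by auto
termination by (relation "measure (\<lambda>(ls, a, g, m, k). m - k)") auto

declare arc_age.simps [simp del]

context
  fixes ls a g :: real and m :: nat
  assumes ls: "ls > 0" and a: "a > 0" and g: "g > 0" and m: "m \<ge> 1"
begin

lemma arc_age_top: "m \<le> k \<Longrightarrow> arc_age ls a g m k = ls / (real m * a)"
  by (simp add: arc_age.simps)

lemma arc_age_below:
  "k < m \<Longrightarrow> arc_age ls a g m k * (real k * a + g) = ls + g * arc_age ls a g m (Suc k)"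
proof -
  assume "k < m"
  moreover have "real k * a + g > 0" using a g by (simp add: add_nonneg_pos)
  ultimately show ?thesis by (subst arc_age.simps) simp
qed

lemma arc_age_top_eq: "arc_age ls a g m m * (real m * a + r) = ls + r * arc_age ls a g m (Suc m)"
  using a m by (simp add: arc_age_top field_simps)

lemma arc_age_pos: "arc_age ls a g m k > 0"
proof (induction k rule: measure_induct_rule[where f = "\<lambda>k. m - k"])
  case (less k)
  show ?case
  proof (cases "m \<le> k")
    case True
    then show ?thesis using ls a m by (simp add: arc_age_top)
  next
    case False
    then have "arc_age ls a g m (Suc k) > 0" by (intro less) simp
    with False ls a g show ?thesis
      by (subst arc_age.simps) (simp add: add_pos_pos add_nonneg_pos)
  qed
qed

lemma arc_age_mult_le: "k \<le> m \<Longrightarrow> arc_age ls a g m k * (real k * a) \<le> ls"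
proof (induction k rule: inc_induct)
  case base
  then show ?case using ls a m by (simp add: arc_age_top)
next
  case (step k)
  have "arc_age ls a g m (Suc k) * (real k * a) \<le> arc_age ls a g m (Suc k) * (real (Suc k) * a)"
    using less_imp_le[OF arc_age_pos] a by (intro mult_left_mono) auto
  with step.IH have "(ls + g * arc_age ls a g m (Suc k)) * (real k * a) \<le> ls * (real k * a + g)"
    using g by (simp add: algebra_simps)
  then have "arc_age ls a g m k * (real k * a) * (real k * a + g) \<le> ls * (real k * a + g)"
    using arc_age_below[OF step.hyps(2)] by (simp add: mult.commute mult.left_commute)
  moreover have "real k * a + g > 0" using a g by (simp add: add_nonneg_pos)
  ultimately show ?case by simp
qed

lemma arc_age_Suc_le: "arc_age ls a g m (Suc k) \<le> arc_age ls a g m k"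
proof (cases "k < m")
  case True
  have "arc_age ls a g m (Suc k) * (real k * a) \<le> arc_age ls a g m (Suc k) * (real (Suc k) * a)"
    using less_imp_le[OF arc_age_pos] a by (intro mult_left_mono) auto
  also have "\<dots> \<le> ls" using True by (intro arc_age_mult_le) simp
  finally have "arc_age ls a g m (Suc k) * (real k * a + g) \<le> arc_age ls a g m k * (real k * a + g)"
    using arc_age_below[OF True] by (simp add: algebra_simps)
  moreover have "real k * a + g > 0" using a g by (simp add: add_nonneg_pos)
  ultimately show ?thesis by simp
next
  case False
  then show ?thesis by (simp add: arc_age_top)
qed

lemma arc_age_eq:
  assumes "k \<le> m" and "k < m \<Longrightarrow> r = g"
  shows "arc_age ls a g m k * (real k * a + r) = ls + r * arc_age ls a g m (Suc k)"
  using assms arc_age_below arc_age_top_eq by (cases "k < m") auto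

lemma arc_age_subsolution:
  assumes "k \<le> m" and "r \<le> g"
  shows "arc_age ls a g m k * (real k * a + r) \<le> ls + r * arc_age ls a g m (Suc k)"
proof -
  define x y where "x = arc_age ls a g m (Suc k)" and "y = arc_age ls a g m k"
  have "y * (real k * a + r) = ls + g * x - (g - r) * y"
    using arc_age_eq[OF assms(1), of g] by (simp add: x_def y_def algebra_simps)
  also have "\<dots> \<le> ls + g * x - (g - r) * x"
    using assms(2) arc_age_Suc_le[of k] by (simp add: x_def y_def mult_left_mono)
  finally show ?thesis by (simp add: x_def y_def algebra_simps)
qed

lemma double_arc_age_supersolution:
  assumes "k \<le> m" and "r \<le> g" and "k < m \<Longrightarrow> g \<le> 2 * r"
  shows "ls + r * (2 * arc_age ls a g m (Suc k)) \<le> 2 * arc_age ls a g m k * (real k * a + r)"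
proof -
  define x y where "x = arc_age ls a g m (Suc k)" and "y = arc_age ls a g m k"
  have step: "y * (real k * a + g) = ls + g * x"
    using arc_age_eq[OF assms(1), of g] by (simp add: x_def y_def)
  have "x \<le> y" "0 < x" using arc_age_Suc_le arc_age_pos by (simp_all add: x_def y_def)
  text \<open>The drop \<open>y - x\<close> is at most \<open>ls / (k a + g)\<close>, which absorbs the factor \<open>2 (g - r) \<le> g\<close>.\<close>
  have "2 * (g - r) * (y - x) \<le> (real k * a + g) * (y - x)"
  proof (cases "k < m")
    case True
    have "0 \<le> real k * a" using a by simp
    then show ?thesis using assms(3)[OF True] \<open>x \<le> y\<close> by (intro mult_right_mono) auto
  next
    case False
    then show ?thesis using assms(1) by (simp add: x_def y_def arc_age_top)
  qed
  also have "\<dots> = ls - real k * a * x" using step by (simp add: algebra_simps)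
  also have "\<dots> \<le> ls" using a \<open>0 < x\<close> by simp
  finally show ?thesis using step by (simp add: x_def[symmetric] y_def[symmetric] algebra_simps)
qed

end

lemma line_rates_sum_interval:
  assumes "p \<le> q" "i \<notin> {p..q}"
  shows "(\<Sum>j\<in>{p..q}. line_rates lam i j) = (if Suc i = p \<or> i = Suc q then lam / 2 else 0)"
proof -
  have "{p..q} \<inter> {j. j = Suc i \<or> i = Suc j} = {j. (Suc i = p \<and> j = p) \<or> (i = Suc q \<and> j = q)}"
    using assms by auto
  then show ?thesis
    unfolding line_rates_def sum.If_cases[OF finite_atLeastAtMost] using assms by auto
qed

lemma nbr_line_interval:
  assumes "lam > 0" "p \<le> q"
  shows "nbr {1..n0} (line_rates lam) {p..q} = {i \<in> {1..n0}. Suc i = p \<or> i = Suc q}"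
  unfolding nbr_def using assms line_rates_sum_interval[OF assms(2)] by (auto split: if_splits)

lemma inflow_line_interval:
  assumes "lam > 0" "1 \<le> p" "p \<le> q" "q \<le> n0"
  shows "inflow {1..n0} (line_rates lam) {p..q} = lam / 2 * (of_bool (1 < p) + of_bool (q < n0))"
proof -
  have nbr: "nbr {1..n0} (line_rates lam) {p..q}
      = (if 1 < p then {p - 1} else {}) \<union> (if q < n0 then {Suc q} else {})"
    using nbr_line_interval[OF assms(1,3)] assms(2-4) by auto
  have "inflow {1..n0} (line_rates lam) {p..q} = (\<Sum>i\<in>nbr {1..n0} (line_rates lam) {p..q}. lam / 2)"
    unfolding inflow_def nbr_line_interval[OF assms(1,3)]
    using line_rates_sum_interval[OF assms(3)] by (intro sum.cong) auto
  then show ?thesis unfolding nbr using assms(3) by auto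
qed

lemma insert_nbr_line_interval:
  assumes "lam > 0" "1 \<le> p" "p \<le> q" "q \<le> n0" "i \<in> nbr {1..n0} (line_rates lam) {p..q}"
  shows "\<exists>p' q'. 1 \<le> p' \<and> p' \<le> q' \<and> q' \<le> n0 \<and> insert i {p..q} = {p'..q'}"
proof -
  have "i \<in> {1..n0}" "Suc i = p \<or> i = Suc q"
    using assms(5) nbr_line_interval[OF assms(1,3)] by auto
  then consider "insert i {p..q} = {i..q}" "Suc i = p" | "insert i {p..q} = {p..i}" "i = Suc q"
    using assms(3) by fastforce
  then show ?thesis using assms \<open>i \<in> {1..n0}\<close> by cases auto
qed

lemma ring_rates_sum_arc:
  assumes "n0 \<ge> 3" "1 \<le> q" "q < i" "i < p" "p \<le> Suc n0"
  shows "(\<Sum>j\<in>{1..q} \<union> {p..n0}. ring_rates n0 lam i j)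
     = (if i = Suc q then lam / 2 else 0) + (if Suc i = p then lam / 2 else 0)"
proof -
  define c where "c = (if p \<le> n0 then p else 1)"
  let ?S = "{1..q} \<union> {p..n0}"
  have "q \<in> ?S" "c \<in> ?S" using assms by (auto simp: c_def)
  have "(\<Sum>j\<in>?S. ring_rates n0 lam i j) = (\<Sum>j\<in>?S.
      (if j = q then (if i = Suc q then lam / 2 else 0) else 0)
    + (if j = c then (if Suc i = p then lam / 2 else 0) else 0))"
    using assms unfolding ring_rates_def c_def by (intro sum.cong) auto
  then show ?thesis using \<open>q \<in> ?S\<close> \<open>c \<in> ?S\<close> by (simp add: sum.distrib)
qed

lemma nbr_ring_arc:
  assumes "n0 \<ge> 3" "lam > 0" "1 \<le> q" "q < p" "p \<le> Suc n0"
  shows "nbr {1..n0} (ring_rates n0 lam) ({1..q} \<union> {p..n0})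
       = {i. q < i \<and> i < p \<and> (i = Suc q \<or> Suc i = p)}"
  unfolding nbr_def
proof (intro Collect_cong iffI)
  fix i
  assume "i \<in> {1..n0} - ({1..q} \<union> {p..n0}) \<and> 0 < (\<Sum>j\<in>{1..q} \<union> {p..n0}. ring_rates n0 lam i j)"
  then show "q < i \<and> i < p \<and> (i = Suc q \<or> Suc i = p)"
    using ring_rates_sum_arc[OF assms(1,3) _ _ assms(5), of i] by (auto split: if_splits)
next
  fix i
  assume "q < i \<and> i < p \<and> (i = Suc q \<or> Suc i = p)"
  then show "i \<in> {1..n0} - ({1..q} \<union> {p..n0}) \<and> 0 < (\<Sum>j\<in>{1..q} \<union> {p..n0}. ring_rates n0 lam i j)"
    using ring_rates_sum_arc[OF assms(1,3) _ _ assms(5), of i] assms by auto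
qed

lemma inflow_ring_arc:
  assumes "n0 \<ge> 3" "lam > 0" "1 \<le> q" "q < p" "p \<le> Suc n0"
  shows "inflow {1..n0} (ring_rates n0 lam) ({1..q} \<union> {p..n0}) = (if Suc q = p then 0 else lam)"
proof (cases "Suc q = p")
  case True
  then show ?thesis unfolding inflow_def nbr_ring_arc[OF assms] by simp
next
  case False
  then have nbr: "{i. q < i \<and> i < p \<and> (i = Suc q \<or> Suc i = p)} = {Suc q, p - 1}"
    using assms(4) by auto
  show ?thesis
  proof (cases "Suc (Suc q) = p")
    case True
    then show ?thesis
      unfolding inflow_def nbr_ring_arc[OF assms] nbr
      using ring_rates_sum_arc[OF assms(1,3) _ _ assms(5), of "Suc q"]
      by (simp add: True[symmetric])
  next
    case False
    then have "Suc q \<noteq> p - 1" by simp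
    then show ?thesis
      unfolding inflow_def nbr_ring_arc[OF assms] nbr
      using False \<open>Suc q \<noteq> p\<close> assms(4) ring_rates_sum_arc[OF assms(1,3) _ _ assms(5)] by simp
  qed
qed

lemma insert_nbr_ring_arc:
  assumes "n0 \<ge> 3" "lam > 0" "1 \<le> q" "q < p" "p \<le> Suc n0"
    and "i \<in> nbr {1..n0} (ring_rates n0 lam) ({1..q} \<union> {p..n0})"
  shows "\<exists>q' p'. 1 \<le> q' \<and> q' < p' \<and> p' \<le> Suc n0 \<and> insert i ({1..q} \<union> {p..n0}) = {1..q'} \<union> {p'..n0}"
proof -
  have "q < i" "i < p" "i = Suc q \<or> Suc i = p" using assms(6) nbr_ring_arc[OF assms(1-5)] by auto
  then show ?thesis
  proof (elim disjE)
    assume "i = Suc q"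
    then have "insert i ({1..q} \<union> {p..n0}) = {1..i} \<union> {p..n0}" using assms(3) by auto
    then show ?thesis using assms(3,5) \<open>q < i\<close> \<open>i < p\<close> by (intro exI[of _ i] exI[of _ p]) simp
  next
    assume "Suc i = p"
    then have "insert i ({1..q} \<union> {p..n0}) = {1..q} \<union> {i..n0}" using assms(5) by auto
    then show ?thesis using assms(3,5) \<open>q < i\<close> \<open>i < p\<close> by (intro exI[of _ q] exI[of _ i]) simp
  qed
qed

lemma vage_line_interval_bounds:
  assumes ls: "ls > 0" and a: "a > 0" and lam: "lam > 0" and S: "1 \<le> p" "p \<le> q" "q \<le> n0"
  defines "R \<equiv> arc_age ls a lam n0"
  shows "R (card {p..q}) \<le> vage {1..n0} (\<lambda>_. a) (line_rates lam) ls {p..q}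
    \<and> vage {1..n0} (\<lambda>_. a) (line_rates lam) ls {p..q} \<le> 2 * R (card {p..q})"
proof (rule vage_comparison[where P = "\<lambda>S. \<exists>p q. 1 \<le> p \<and> p \<le> q \<and> q \<le> n0 \<and> S = {p..q}"
      and Z = "\<lambda>k. 2 * R k"])
  fix S assume "\<exists>p q. 1 \<le> p \<and> p \<le> q \<and> q \<le> n0 \<and> S = {p..q}"
  then obtain p q where pq: "1 \<le> p" "p \<le> q" "q \<le> n0" and S: "S = {p..q}" by blast
  let ?r = "inflow {1..n0} (line_rates lam) S"
  have r: "?r = lam / 2 * (of_bool (1 < p) + of_bool (q < n0))"
    unfolding S by (rule inflow_line_interval[OF lam pq])
  have k: "card S \<le> n0" "card S < n0 \<longleftrightarrow> 1 < p \<or> q < n0" using pq S by auto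
  then have "?r \<le> lam" "card S < n0 \<Longrightarrow> lam \<le> 2 * ?r"
    using lam r by (cases "1 < p"; cases "q < n0"; simp)+
  then show "R (card S) * (real (card S) * a + ?r) \<le> ls + ?r * R (Suc (card S))"
    and "ls + ?r * (2 * R (Suc (card S))) \<le> 2 * R (card S) * (real (card S) * a + ?r)"
    unfolding R_def using arc_age_subsolution double_arc_age_supersolution ls a lam pq k(1) by auto
next
  fix S i assume "\<exists>p q. 1 \<le> p \<and> p \<le> q \<and> q \<le> n0 \<and> S = {p..q}" "i \<in> nbr {1..n0} (line_rates lam) S"
  then show "\<exists>p q. 1 \<le> p \<and> p \<le> q \<and> q \<le> n0 \<and> insert i S = {p..q}"
    using insert_nbr_line_interval[OF lam] by blast
qed (use a S in auto)

lemma vage_ring_arc: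
  assumes ls: "ls > 0" and a: "a > 0" and lam: "lam > 0" and n0: "n0 \<ge> 3"
    and S: "1 \<le> q" "q < p" "p \<le> Suc n0"
  shows "vage {1..n0} (\<lambda>_. a) (ring_rates n0 lam) ls ({1..q} \<union> {p..n0})
    = arc_age ls a lam n0 (card ({1..q} \<union> {p..n0}))"
proof -
  let ?R = "arc_age ls a lam n0"
  let ?P = "\<lambda>S. \<exists>q p. 1 \<le> q \<and> q < p \<and> p \<le> Suc n0 \<and> S = {1..q} \<union> {p..n0}"
  have "?R (card S) \<le> vage {1..n0} (\<lambda>_. a) (ring_rates n0 lam) ls S
    \<and> vage {1..n0} (\<lambda>_. a) (ring_rates n0 lam) ls S \<le> ?R (card S)"
    if "?P S" for S
  proof (rule vage_comparison[where P = ?P])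
    fix S assume "?P S"
    then obtain q p where qp: "1 \<le> q" "q < p" "p \<le> Suc n0" and S: "S = {1..q} \<union> {p..n0}" by blast
    let ?r = "inflow {1..n0} (ring_rates n0 lam) S"
    have r: "?r = (if Suc q = p then 0 else lam)"
      unfolding S by (rule inflow_ring_arc[OF n0 lam qp])
    have k: "card S = q + (Suc n0 - p)" using qp S by (simp add: card_Un_disjoint)
    then have "card S \<le> n0" "card S < n0 \<Longrightarrow> ?r = lam" using qp r by auto
    then have "?R (card S) * (real (card S) * a + ?r) = ls + ?r * ?R (Suc (card S))"
      using arc_age_eq ls a lam n0 by simp
    then show "?R (card S) * (real (card S) * a + ?r) \<le> ls + ?r * ?R (Suc (card S))"
      and "ls + ?r * ?R (Suc (card S)) \<le> ?R (card S) * (real (card S) * a + ?r)" by simp_all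
  next
    fix S i assume "?P S" "i \<in> nbr {1..n0} (ring_rates n0 lam) S"
    then show "?P (insert i S)" using insert_nbr_ring_arc[OF n0 lam] by blast
  qed (use a that in auto)
  moreover have "?P ({1..q} \<union> {p..n0})" using S by blast
  ultimately show ?thesis by (meson order_antisym)
qed

theorem mainTheorem2:
  fixes n n0 i :: nat and lam ls :: real
  assumes "n \<ge> 1" and "ls > 0" and "lam > 0" and "n0 \<ge> 3" and "i \<in> {1..n0}"
  shows "ring_age n0 n lam ls 1 \<le> line_age n0 n lam ls i
       \<and> line_age n0 n lam ls i \<le> 2 * ring_age n0 n lam ls 1"
proof -
  have a: "lam / real n > 0" using assms(1,3) by simp
  have "ring_age n0 n lam ls 1 = arc_age ls (lam / real n) lam n0 1"
    using vage_ring_arc[OF assms(2) a assms(3,4), of 1 "Suc n0"] assms(4)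
    by (simp add: ring_age_def)
  moreover have "line_age n0 n lam ls i
      = vage {1..n0} (\<lambda>_. lam / real n) (line_rates lam) ls {i..i}"
    by (simp add: line_age_def)
  ultimately show ?thesis
    using vage_line_interval_bounds[OF assms(2) a assms(3), of i i n0] assms(5) by simp
qed

end
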